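(* Let $P$ be a connected shrub on a finite set $I$ with at least two elements. Then there exists a vertex of height $1$ that covers every vertex of height $0$ of $P$.
   Context: A shrub $P$ on a finite set $I$ is a set $E$ of edges (unordered pairs $\{i,j\}$ of distinct elements of $I$) together with a height function $h_P:I\to\mathbb{N}$. Say that $j$ covers $i$ if $\{i,j\}\in E$ and $h_P(j)=h_P(i)+1$. The axioms are: (1) if $\{i,j\}\in E$ then $h_P(i)=h_P(j)\pm 1$; (2) if $h_P(j)>0$ then there is an edge $\{i,j\}$ with $h_P(i)=h_P(j)-1$; (3) there are no four distinct vertices $a,b,c,d$ such that $a$ covers $b$ and $c$, $c$ covers $d$, and $\{b,d\}\notin E$; (4) there are no five distinct vertices $a,b,c,d,e$ such that $a$ covers $c$ and $d$, $b$ covers $d$ and $e$, $\{a,e\}\notin E$ and $\{b,c\}\notin E$. A shrub is connected if its underlying graph $(I,E)$ is connected. *)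

theory Defs
  imports Main
begin

definition covers :: "'a set set \<Rightarrow> ('a \<Rightarrow> nat) \<Rightarrow> 'a \<Rightarrow> 'a \<Rightarrow> bool" where
  "covers E h j i \<longleftrightarrow> {i, j} \<in> E \<and> h j = h i + 1"

definition shrub :: "'a set \<Rightarrow> 'a set set \<Rightarrow> ('a \<Rightarrow> nat) \<Rightarrow> bool" where
  "shrub I E h \<longleftrightarrow>
     finite I \<and>
     (\<forall>e\<in>E. \<exists>i j. e = {i, j} \<and> i \<noteq> j \<and> i \<in> I \<and> j \<in> I) \<and>
     (\<forall>i\<in>I. \<forall>j\<in>I. {i, j} \<in> E \<longrightarrow> h i = h j + 1 \<or> h j = h i + 1) \<and>
     (\<forall>j\<in>I. h j > 0 \<longrightarrow> (\<exists>i\<in>I. {i, j} \<in> E \<and> h i + 1 = h j)) \<and>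
     \<not> (\<exists>a\<in>I. \<exists>b\<in>I. \<exists>c\<in>I. \<exists>d\<in>I. distinct [a, b, c, d] \<and>
          covers E h a b \<and> covers E h a c \<and> covers E h c d \<and> {b, d} \<notin> E) \<and>
     \<not> (\<exists>a\<in>I. \<exists>b\<in>I. \<exists>c\<in>I. \<exists>d\<in>I. \<exists>e\<in>I. distinct [a, b, c, d, e] \<and>
          covers E h a c \<and> covers E h a d \<and> covers E h b d \<and> covers E h b e \<and>
          {a, e} \<notin> E \<and> {b, c} \<notin> E)"

definition shrub_connected :: "'a set \<Rightarrow> 'a set set \<Rightarrow> bool" where
  "shrub_connected I E \<longleftrightarrow>
     (\<forall>x\<in>I. \<forall>y\<in>I. \<exists>p. p \<noteq> [] \<and> hd p = x \<and> last p = y \<and> set p \<subseteq> I \<and>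
        (\<forall>k. Suc k < length p \<longrightarrow> {p ! k, p ! Suc k} \<in> E))"

end

theory Submission
  imports Defs
begin

text \<open>Choose a vertex \<open>v\<close> of height 1 covering as many vertices as possible, and call a
vertex \<open>x\<close> good if every descending chain from \<open>x\<close> to height 0 ends at a neighbour of \<open>v\<close>.
Then \<open>v\<close> is good, and goodness spreads along every edge: downwards trivially, upwards by
axiom (3) above height 0, and at height 0 by axiom (4), which would otherwise let another
vertex of height 1 cover strictly more than \<open>v\<close>. By connectedness every vertex is good,
and a good vertex of height 0 is covered by \<open>v\<close>.\<close>

lemma shrub_finite: "shrub I E h \<Longrightarrow> finite I"
  by (simp add: shrub_def)

lemma shrub_edge_covers:
  assumes "shrub I E h" "a \<in> I" "b \<in> I" "{a, b} \<in> E"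
  shows "covers E h a b \<or> covers E h b a"
  using assms by (auto simp: shrub_def covers_def insert_commute)

lemma shrub_ex_lower_cover:
  assumes "shrub I E h" "j \<in> I" "h j > 0"
  shows "\<exists>i\<in>I. covers E h j i"
  using assms by (fastforce simp: shrub_def covers_def insert_commute)

lemma shrub_square:
  assumes "shrub I E h" "a \<in> I" "b \<in> I" "c \<in> I" "d \<in> I" "distinct [a, b, c, d]"
    and "covers E h a b" "covers E h a c" "covers E h c d"
  shows "{b, d} \<in> E"
  using assms unfolding shrub_def by blast

lemma shrub_no_zigzag:
  assumes "shrub I E h" "a \<in> I" "b \<in> I" "c \<in> I" "d \<in> I" "e \<in> I" "distinct [a, b, c, d, e]"
    and "covers E h a c" "covers E h a d" "covers E h b d" "covers E h b e" "{a, e} \<notin> E"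
  shows "{b, c} \<in> E"
  using assms unfolding shrub_def by blast

lemma shrub_ex_height_zero:
  assumes "shrub I E h" "x \<in> I"
  shows "\<exists>u\<in>I. h u = 0"
proof -
  obtain u where "u \<in> I" and least: "\<forall>w. w \<in> I \<longrightarrow> h u \<le> h w"
    using ex_has_least_nat[of "\<lambda>w. w \<in> I" x h] assms(2) by blast
  moreover have "h u = 0"
  proof (rule ccontr)
    assume "h u \<noteq> 0"
    then obtain i where "i \<in> I" "covers E h u i"
      using shrub_ex_lower_cover[OF assms(1) \<open>u \<in> I\<close>] by blast
    with least show False by (fastforce simp: covers_def)
  qed
  ultimately show ?thesis by blast
qed

lemma shrub_connected_propagate:
  assumes "shrub_connected I E" "x \<in> I" "y \<in> I" "P x"
    and step: "\<And>a b. a \<in> I \<Longrightarrow> b \<in> I \<Longrightarrow> {a, b} \<in> E \<Longrightarrow> P a \<Longrightarrow> P b"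
  shows "P y"
proof -
  obtain p where p: "p \<noteq> []" "hd p = x" "last p = y" "set p \<subseteq> I"
      and edges: "\<forall>k. Suc k < length p \<longrightarrow> {p ! k, p ! Suc k} \<in> E"
    using assms(1-3) unfolding shrub_connected_def by blast
  have "k < length p \<Longrightarrow> P (p ! k)" for k
  proof (induction k)
    case 0
    then show ?case using p(1,2) \<open>P x\<close> by (simp add: hd_conv_nth)
  next
    case (Suc k)
    then show ?case using step[of "p ! k" "p ! Suc k"] edges p(4) by (simp add: subset_iff)
  qed
  then show ?thesis using p(1,3) by (metis last_conv_nth diff_less zero_less_one length_greater_0_conv)
qed

lemma shrub_connected_ex_neighbour:
  assumes "shrub_connected I E" "card I \<ge> 2" "x \<in> I"
  shows "\<exists>y\<in>I. {x, y} \<in> E"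
proof -
  have "\<not> I \<subseteq> {x}"
    using assms(2) card_mono[of "{x}" I] by auto
  then obtain y where "y \<in> I" "y \<noteq> x" by blast
  then obtain p where p: "p \<noteq> []" "hd p = x" "last p = y" "set p \<subseteq> I"
      and edges: "\<forall>k. Suc k < length p \<longrightarrow> {p ! k, p ! Suc k} \<in> E"
    using assms(1,3) unfolding shrub_connected_def by blast
  have "length p \<ge> 2"
    using p \<open>y \<noteq> x\<close> by (cases p) (auto simp: Suc_le_eq)
  then have "{x, p ! 1} \<in> E" "p ! 1 \<in> I"
    using p(1,2,4) edges[rule_format, of 0] by (auto simp: hd_conv_nth)
  then show ?thesis by blast
qed

definition lower_covers :: "'a set \<Rightarrow> 'a set set \<Rightarrow> ('a \<Rightarrow> nat) \<Rightarrow> 'a \<Rightarrow> 'a set" where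
  "lower_covers I E h v = {u \<in> I. covers E h v u}"

primrec descents_adjacent ::
  "'a set \<Rightarrow> 'a set set \<Rightarrow> ('a \<Rightarrow> nat) \<Rightarrow> 'a \<Rightarrow> nat \<Rightarrow> 'a \<Rightarrow> bool" where
  "descents_adjacent I E h v 0 x \<longleftrightarrow> {x, v} \<in> E"
| "descents_adjacent I E h v (Suc k) x \<longleftrightarrow>
     (\<forall>z\<in>I. covers E h x z \<longrightarrow> descents_adjacent I E h v k z)"

abbreviation good :: "'a set \<Rightarrow> 'a set set \<Rightarrow> ('a \<Rightarrow> nat) \<Rightarrow> 'a \<Rightarrow> 'a \<Rightarrow> bool" where
  "good I E h v x \<equiv> descents_adjacent I E h v (h x) x"

lemma good_height_one_self: "h v = 1 \<Longrightarrow> good I E h v v"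
  by (simp add: covers_def insert_commute)

lemma good_height_one_iff:
  "h y = 1 \<Longrightarrow> good I E h v y \<longleftrightarrow> (\<forall>z\<in>I. covers E h y z \<longrightarrow> {z, v} \<in> E)"
  by simp

lemma good_down:
  assumes "y \<in> I" "covers E h x y" "good I E h v x"
  shows "good I E h v y"
  using assms by (simp add: covers_def)

lemma lower_covers_subset_if_not_adjacent:
  assumes sh: "shrub I E h" and I: "v \<in> I" "y \<in> I" "x \<in> I" "z \<in> I" and "y \<noteq> v"
    and hv: "h v = 1" and cover: "covers E h v x" "covers E h y x" "covers E h y z"
    and nadj: "{z, v} \<notin> E"
  shows "lower_covers I E h v \<subseteq> lower_covers I E h y"
proof
  fix e assume "e \<in> lower_covers I E h v"
  then have "e \<in> I" "covers E h v e" by (auto simp: lower_covers_def)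
  have heights: "h y = 1" "h x = 0" "h z = 0" "h e = 0"
    using hv cover \<open>covers E h v e\<close> by (auto simp: covers_def)
  show "e \<in> lower_covers I E h y"
  proof (rule ccontr)
    assume "e \<notin> lower_covers I E h y"
    then have "\<not> covers E h y e" using \<open>e \<in> I\<close> by (simp add: lower_covers_def)
    then have "{y, e} \<notin> E" using heights by (simp add: covers_def insert_commute)
    moreover have "\<not> covers E h v z" using nadj by (simp add: covers_def insert_commute)
    then have "z \<noteq> x" "z \<noteq> e" "x \<noteq> e"
      using cover \<open>covers E h v e\<close> \<open>\<not> covers E h y e\<close> by auto
    then have "distinct [y, v, z, x, e]"
      using \<open>y \<noteq> v\<close> heights hv by auto
    ultimately have "{v, z} \<in> E"
      using shrub_no_zigzag[OF sh I(2,1,4,3) \<open>e \<in> I\<close>] cover \<open>covers E h v e\<close> by blast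
    with nadj show False by (simp add: insert_commute)
  qed
qed

lemma good_up_from_bottom:
  assumes sh: "shrub I E h" and "v \<in> I" "h v = 1"
    and maximal: "\<And>w. w \<in> I \<Longrightarrow> h w = 1 \<Longrightarrow> card (lower_covers I E h w) \<le> card (lower_covers I E h v)"
    and "x \<in> I" "y \<in> I" "h x = 0" "covers E h y x" "good I E h v x"
  shows "good I E h v y"
proof (cases "y = v")
  case True
  then show ?thesis using good_height_one_self[of h v] \<open>h v = 1\<close> by simp
next
  case False
  have "h y = 1" using assms(7,8) by (simp add: covers_def)
  have "covers E h v x" using assms(3,7,9) by (simp add: covers_def insert_commute)
  show ?thesis
  proof (rule ccontr)
    assume "\<not> good I E h v y"
    then obtain z where "z \<in> I" "covers E h y z" "{z, v} \<notin> E"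
      using good_height_one_iff[of h y I E v] \<open>h y = 1\<close> by blast
    moreover have "\<not> covers E h v z" using \<open>{z, v} \<notin> E\<close> by (simp add: covers_def insert_commute)
    ultimately have "z \<in> lower_covers I E h y - lower_covers I E h v"
      by (simp add: lower_covers_def)
    moreover have "lower_covers I E h v \<subseteq> lower_covers I E h y"
      using lower_covers_subset_if_not_adjacent[OF sh \<open>v \<in> I\<close> \<open>y \<in> I\<close> \<open>x \<in> I\<close> \<open>z \<in> I\<close>
          False \<open>h v = 1\<close> \<open>covers E h v x\<close> \<open>covers E h y x\<close> \<open>covers E h y z\<close> \<open>{z, v} \<notin> E\<close>] .
    ultimately have "lower_covers I E h v \<subset> lower_covers I E h y" by blast
    moreover have "finite (lower_covers I E h y)"
      using shrub_finite[OF sh] by (simp add: lower_covers_def)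
    ultimately have "card (lower_covers I E h v) < card (lower_covers I E h y)"
      by (simp add: psubset_card_mono)
    with maximal[OF \<open>y \<in> I\<close> \<open>h y = 1\<close>] show False by simp
  qed
qed

lemma good_up_above_bottom:
  assumes sh: "shrub I E h" and "x \<in> I" "y \<in> I" "h x > 0" "covers E h y x" "good I E h v x"
  shows "good I E h v y"
proof -
  obtain k where hx: "h x = Suc k" using \<open>h x > 0\<close> gr0_implies_Suc by blast
  then have hy: "h y = Suc (Suc k)" using \<open>covers E h y x\<close> by (simp add: covers_def)
  have "descents_adjacent I E h v k w" if "z \<in> I" "covers E h y z" "w \<in> I" "covers E h z w" for z w
  proof (cases "z = x")
    case True
    then show ?thesis using assms(6) hx that by simp
  next
    case False
    then have "distinct [y, x, z, w]"
      using hx hy that assms(5) by (auto simp: covers_def)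
    then have "{x, w} \<in> E"
      using shrub_square[OF sh \<open>y \<in> I\<close> \<open>x \<in> I\<close> that(1,3)] that assms(5) by blast
    then have "covers E h x w" using hx hy that by (simp add: covers_def insert_commute)
    then show ?thesis using assms(6) hx that(3) by simp
  qed
  then show ?thesis using hy by simp
qed

lemma good_along_edge:
  assumes sh: "shrub I E h" and "v \<in> I" "h v = 1"
    and maximal: "\<And>w. w \<in> I \<Longrightarrow> h w = 1 \<Longrightarrow> card (lower_covers I E h w) \<le> card (lower_covers I E h v)"
    and "a \<in> I" "b \<in> I" "{a, b} \<in> E" "good I E h v a"
  shows "good I E h v b"
proof -
  consider "covers E h a b" | "covers E h b a"
    using shrub_edge_covers[OF sh \<open>a \<in> I\<close> \<open>b \<in> I\<close> \<open>{a, b} \<in> E\<close>] by blast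
  then show ?thesis
  proof cases
    case 1
    show ?thesis by (rule good_down[OF \<open>b \<in> I\<close> 1 \<open>good I E h v a\<close>])
  next
    case 2
    show ?thesis
    proof (cases "h a = 0")
      case True
      show ?thesis
        by (rule good_up_from_bottom[OF sh \<open>v \<in> I\<close> \<open>h v = 1\<close> maximal \<open>a \<in> I\<close> \<open>b \<in> I\<close> True 2
              \<open>good I E h v a\<close>])
    next
      case False
      then show ?thesis
        using good_up_above_bottom[OF sh \<open>a \<in> I\<close> \<open>b \<in> I\<close> _ 2 \<open>good I E h v a\<close>] by simp
    qed
  qed
qed

lemma shrub_ex_height_one:
  assumes "shrub I E h" "shrub_connected I E" "card I \<ge> 2"
  shows "\<exists>x\<in>I. h x = 1"
proof -
  have "I \<noteq> {}" using assms(3) by (intro notI) simp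
  then obtain x0 where "x0 \<in> I" "h x0 = 0"
    using shrub_ex_height_zero[OF assms(1)] by blast
  then obtain x1 where "x1 \<in> I" "{x0, x1} \<in> E"
    using shrub_connected_ex_neighbour[OF assms(2,3)] by blast
  then show ?thesis
    using shrub_edge_covers[OF assms(1) \<open>x0 \<in> I\<close>] \<open>h x0 = 0\<close> by (auto simp: covers_def)
qed

lemma ex_max_card_lower_covers:
  assumes "finite I" "x \<in> I" "h x = 1"
  shows "\<exists>v. (v \<in> I \<and> h v = 1) \<and>
    (\<forall>w. w \<in> I \<and> h w = 1 \<longrightarrow> card (lower_covers I E h w) \<le> card (lower_covers I E h v))"
proof -
  have "card (lower_covers I E h w) < Suc (card I)" for w
    using assms(1) by (simp add: lower_covers_def card_mono le_imp_less_Suc)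
  then show ?thesis
    using Lattices_Big.ex_has_greatest_nat[of "\<lambda>w. w \<in> I \<and> h w = 1" x
        "\<lambda>w. card (lower_covers I E h w)" "Suc (card I)"] assms(2,3) by simp
qed

theorem mainTheorem1:
  fixes I :: "'a set" and E :: "'a set set" and h :: "'a \<Rightarrow> nat"
  assumes "shrub I E h"
    and "shrub_connected I E"
    and "card I \<ge> 2"
  shows "\<exists>v\<in>I. h v = 1 \<and> (\<forall>u\<in>I. h u = 0 \<longrightarrow> covers E h v u)"
proof -
  obtain x where "x \<in> I" "h x = 1"
    using shrub_ex_height_one[OF assms] by blast
  then have "\<exists>v. (v \<in> I \<and> h v = 1) \<and>
      (\<forall>w. w \<in> I \<and> h w = 1 \<longrightarrow> card (lower_covers I E h w) \<le> card (lower_covers I E h v))"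
    by (rule ex_max_card_lower_covers[OF shrub_finite[OF assms(1)]])
  then obtain v where v: "v \<in> I" "h v = 1"
    and maximal: "\<And>w. w \<in> I \<Longrightarrow> h w = 1 \<Longrightarrow> card (lower_covers I E h w) \<le> card (lower_covers I E h v)"
    by blast
  have good: "good I E h v u" if "u \<in> I" for u
    using assms(2) \<open>v \<in> I\<close> that
  proof (rule shrub_connected_propagate[where P = "good I E h v"])
    show "good I E h v v" using v(2) by (rule good_height_one_self)
  qed (rule good_along_edge[OF assms(1) v(1) v(2) maximal])
  have "covers E h v u" if "u \<in> I" "h u = 0" for u
    using good[OF \<open>u \<in> I\<close>] \<open>h u = 0\<close> v(2) by (simp add: covers_def insert_commute)
  then show ?thesis using v by blast
qed

end
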